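(* Let $n\ge 2$ be even. Then there exists no matching mechanism that is resolute and symmetric (i.e. $G^*$-symmetric).
   Context: Fix $n\ge 2$, $W=\{1,\dots,n\}$ (women), $M=\{n+1,\dots,2n\}$ (men), $I=W\cup M$. Permutations compose right-to-left. A preference profile is a function $p$ on $I$ assigning to each $x\in W$ a linear order $p(x)$ on $M$ and to each $y\in M$ a linear order $p(y)$ on $W$; $\mathcal{P}$ is the set of preference profiles. A matching is a permutation $\mu$ of $I$ with $\mu(W)=M$, $\mu(M)=W$ and $\mu(\mu(z))=z$ for all $z\in I$; $\mathcal{M}$ is the set of matchings. Let $G^*=\{\varphi\in\mathrm{Sym}(I):\{\varphi(W),\varphi(M)\}=\{W,M\}\}$. For a linear order $R$ on $X\subseteq I$ and $\varphi\in\mathrm{Sym}(I)$, $\varphi R$ is the relation on $\varphi(X)$ with $(a,b)\in\varphi R$ iff $(\varphi^{-1}(a),\varphi^{-1}(b))\in R$. For $p\in\mathcal{P}$ and $\varphi\in G^*$, $p^\varphi\in\mathcal{P}$ is defined by $p^\varphi(z)=\varphi\,p(\varphi^{-1}(z))$. For a permutation $\mu$, $\mu^\varphi=\varphi\mu\varphi^{-1}$, and for a set $S$ of permutations $S^\varphi=\{\mu^\varphi:\mu\in S\}$. A matching mechanism is a correspondence $F$ from $\mathcal{P}$ to $\mathcal{M}$ (a map assigning to each $p$ a subset $F(p)\subseteq\mathcal{M}$). $F$ is resolute if $|F(p)|=1$ for all $p$. For $U\subseteq G^*$, $F$ is $U$-symmetric if $F(p^\varphi)=F(p)^\varphi$ for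 all $p\in\mathcal{P}$, $\varphi\in U$; symmetric means $G^*$-symmetric. *)

theory Defs
  imports "HOL-Combinatorics.Permutations"
begin

text \<open>A preference profile assigns to every agent a relation (set of pairs); values outside I
  are fixed to the empty relation so that profiles are exactly functions on I.\<close>

definition women :: "nat \<Rightarrow> nat set" where "women n = {1..n}"
definition men :: "nat \<Rightarrow> nat set" where "men n = {n+1..2*n}"
definition agents :: "nat \<Rightarrow> nat set" where "agents n = women n \<union> men n"

type_synonym profile = "nat \<Rightarrow> (nat \<times> nat) set"

definition profiles :: "nat \<Rightarrow> profile set" where
  "profiles n = {p. (\<forall>x\<in>women n. linear_order_on (men n) (p x))
                  \<and> (\<forall>y\<in>men n. linear_order_on (women n) (p y))
                  \<and> (\<forall>z. z \<notin> agents n \<longrightarrow> p z = {})}"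

definition matchings :: "nat \<Rightarrow> (nat \<Rightarrow> nat) set" where
  "matchings n = {\<mu>. \<mu> permutes agents n \<and> \<mu> ` women n = men n \<and> \<mu> ` men n = women n
                   \<and> (\<forall>z\<in>agents n. \<mu> (\<mu> z) = z)}"

definition Gstar :: "nat \<Rightarrow> (nat \<Rightarrow> nat) set" where
  "Gstar n = {\<phi>. \<phi> permutes agents n \<and> {\<phi> ` women n, \<phi> ` men n} = {women n, men n}}"

definition rel_act :: "(nat \<Rightarrow> nat) \<Rightarrow> (nat \<times> nat) set \<Rightarrow> (nat \<times> nat) set" where
  "rel_act \<phi> R = {(a, b). (inv \<phi> a, inv \<phi> b) \<in> R}"

definition profile_act :: "profile \<Rightarrow> (nat \<Rightarrow> nat) \<Rightarrow> profile" where
  "profile_act p \<phi> = (\<lambda>z. rel_act \<phi> (p (inv \<phi> z)))"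

definition perm_conj :: "(nat \<Rightarrow> nat) \<Rightarrow> (nat \<Rightarrow> nat) \<Rightarrow> (nat \<Rightarrow> nat)" where
  "perm_conj \<mu> \<phi> = \<phi> \<circ> \<mu> \<circ> inv \<phi>"

definition mechanism :: "nat \<Rightarrow> (profile \<Rightarrow> (nat \<Rightarrow> nat) set) \<Rightarrow> bool" where
  "mechanism n F \<longleftrightarrow> (\<forall>p\<in>profiles n. F p \<subseteq> matchings n)"

definition resolute :: "nat \<Rightarrow> (profile \<Rightarrow> (nat \<Rightarrow> nat) set) \<Rightarrow> bool" where
  "resolute n F \<longleftrightarrow> (\<forall>p\<in>profiles n. card (F p) = 1)"

definition U_symmetric :: "nat \<Rightarrow> (nat \<Rightarrow> nat) set \<Rightarrow> (profile \<Rightarrow> (nat \<Rightarrow> nat) set) \<Rightarrow> bool" where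
  "U_symmetric n U F \<longleftrightarrow>
     (\<forall>p\<in>profiles n. \<forall>\<phi>\<in>U. F (profile_act p \<phi>) = (\<lambda>\<mu>. perm_conj \<mu> \<phi>) ` F p)"

definition symmetric :: "nat \<Rightarrow> (profile \<Rightarrow> (nat \<Rightarrow> nat) set) \<Rightarrow> bool" where
  "symmetric n F \<longleftrightarrow> U_symmetric n (Gstar n) F"

end

theory Submission
  imports Defs
begin

text \<open>Seat the 2n agents at a round table, alternating woman, man, woman, ...; in the
  profile used, every agent ranks the opposite sex by clockwise distance along the table.
  This profile is fixed by the rotation of the table by one seat, which lies in G*, so a
  resolute symmetric mechanism would have to select a matching commuting with the rotation.
  Since the rotation acts transitively, such a matching moves every agent the same number j
  of seats clockwise; j is odd since partners have opposite sex, and 2j = 2n since a matching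
  is an involution. Hence j = n, contradicting that n is even.\<close>

definition seat :: "nat \<Rightarrow> nat \<Rightarrow> nat" where
  "seat n x = (if x \<le> n then 2 * (x - 1) else 2 * (x - n) - 1)"

text \<open>One seat clockwise: woman i \<mapsto> man n + i \<mapsto> woman i + 1, and man 2n \<mapsto> woman 1.\<close>
definition rot :: "nat \<Rightarrow> nat \<Rightarrow> nat" where
  "rot n x = (if 1 \<le> x \<and> x \<le> n then n + x
              else if n < x \<and> x < 2 * n then x - n + 1
              else if x = 2 * n \<and> 0 < n then 1 else x)"

definition seat_dist :: "nat \<Rightarrow> nat \<Rightarrow> nat \<Rightarrow> nat" where
  "seat_dist n z x = (seat n x + 2 * n - seat n z) mod (2 * n)"

text \<open>Within the table, an odd clockwise distance means exactly the opposite sex.\<close>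
definition round_table_profile :: "nat \<Rightarrow> profile" where
  "round_table_profile n z =
     (if z \<in> agents n
      then {(x, y). x \<in> agents n \<and> y \<in> agents n \<and> odd (seat_dist n z x) \<and> odd (seat_dist n z y)
                    \<and> seat_dist n z x \<le> seat_dist n z y}
      else {})"

lemma linear_order_on_key:
  fixes f :: "'a \<Rightarrow> 'b::linorder"
  assumes "inj_on f A"
  shows "linear_order_on A {(x, y). x \<in> A \<and> y \<in> A \<and> f x \<le> f y}"
  using assms
  unfolding linear_order_on_def partial_order_on_def preorder_on_def refl_on_def trans_def
    antisym_def total_on_def inj_on_def
  by auto

lemma profile_act_eqI:
  assumes "bij \<phi>" and "\<And>z u v. (\<phi> u, \<phi> v) \<in> p (\<phi> z) \<longleftrightarrow> (u, v) \<in> p z"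
  shows "profile_act p \<phi> = p"
proof
  fix z
  have "\<phi> (inv \<phi> a) = a" for a
    using assms(1) by (simp add: bij_is_surj surj_f_inv_f)
  then have "(inv \<phi> a, inv \<phi> b) \<in> p (inv \<phi> z) \<longleftrightarrow> (a, b) \<in> p z" for a b
    using assms(2)[of "inv \<phi> a" "inv \<phi> b" "inv \<phi> z"] by simp
  then show "profile_act p \<phi> z = p z"
    by (auto simp: profile_act_def rel_act_def)
qed

lemma resolute_symmetric_commute:
  assumes "resolute n F" and "U_symmetric n U F" and "p \<in> profiles n" and "\<phi> \<in> U"
    and "inj \<phi>" and "profile_act p \<phi> = p" and "\<mu> \<in> F p"
  shows "\<mu> \<circ> \<phi> = \<phi> \<circ> \<mu>"
proof -
  have "card (F p) = 1"
    using assms(1,3) by (simp add: resolute_def)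
  then have single: "F p = {\<mu>}"
    using assms(7) by (metis card_1_singletonE singletonD)
  have "F p = (\<lambda>\<mu>. perm_conj \<mu> \<phi>) ` F p"
    using assms(2-4,6) unfolding U_symmetric_def by metis
  then have "\<mu> = \<phi> \<circ> \<mu> \<circ> inv \<phi>"
    by (simp add: single perm_conj_def)
  then have "\<mu> \<circ> \<phi> = \<phi> \<circ> \<mu> \<circ> (inv \<phi> \<circ> \<phi>)"
    by (metis comp_assoc)
  then show ?thesis
    using assms(5) by simp
qed

lemma mod_diff_Suc_Suc:
  fixes a b m :: nat
  assumes "a < m" and "b < m"
  shows "((a + 1) mod m + m - (b + 1) mod m) mod m = (a + m - b) mod m"
  using assms by (auto simp: mod_if)

lemma mod_diff_cancel_right:
  fixes a b c m :: nat
  assumes "a < m" and "b < m" and "c < m" and "(a + m - c) mod m = (b + m - c) mod m"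
  shows "a = b"
  using assms by (auto simp: mod_if split: if_split_asm)

lemma mod_diff_add_swap:
  fixes a b m :: nat
  assumes "a \<noteq> b" and "a < m" and "b < m"
  shows "(a + m - b) mod m + (b + m - a) mod m = m"
  using assms by (auto simp: mod_if)

lemma odd_mod_diff_iff:
  fixes a b m :: nat
  assumes "even m" and "b < m"
  shows "odd ((a + m - b) mod m) \<longleftrightarrow> odd (a + b)"
  using assms by (auto simp: dvd_mod_iff)

lemma women_men_disjoint: "women n \<inter> men n = {}"
  by (auto simp: women_def men_def)

lemma agents_iff: "x \<in> agents n \<longleftrightarrow> 1 \<le> x \<and> x \<le> 2 * n"
  by (auto simp: agents_def women_def men_def)

lemma seat_less: "x \<in> agents n \<Longrightarrow> seat n x < 2 * n"
  by (auto simp: agents_iff seat_def)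

lemma seat_inj: "inj_on (seat n) (agents n)"
  by (auto simp: inj_on_def agents_iff seat_def split: if_splits) presburger+

lemma even_seat_iff: "x \<in> agents n \<Longrightarrow> even (seat n x) \<longleftrightarrow> x \<in> women n"
  by (auto simp: agents_iff women_def seat_def)

lemma rot_in_agents_iff: "rot n x \<in> agents n \<longleftrightarrow> x \<in> agents n"
  by (auto simp: agents_iff rot_def)

lemma rot_outside: "x \<notin> agents n \<Longrightarrow> rot n x = x"
  by (auto simp: agents_iff rot_def)

lemma seat_rot:
  "x \<in> agents n \<Longrightarrow>
     seat n (rot n x) = (if seat n x + 1 = 2 * n then 0 else seat n x + 1)"
  by (auto simp: agents_iff rot_def seat_def)

lemma seat_rot_mod:
  assumes "x \<in> agents n"
  shows "seat n (rot n x) = (seat n x + 1) mod (2 * n)"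
  using seat_less[OF assms] by (simp add: seat_rot[OF assms] mod_if)

lemma inj_rot: "inj (rot n)"
proof (rule injI)
  fix x y
  assume eq: "rot n x = rot n y"
  show "x = y"
  proof (cases "x \<in> agents n")
    case True
    then have "y \<in> agents n"
      using eq rot_in_agents_iff by metis
    with True eq have "seat n x = seat n y"
      using seat_rot seat_less by (metis Suc_eq_plus1 Suc_neq_Zero add_right_cancel)
    then show ?thesis
      using seat_inj True \<open>y \<in> agents n\<close> by (auto dest: inj_onD)
  next
    case False
    then have "y \<notin> agents n"
      using eq rot_in_agents_iff by metis
    with False eq show ?thesis
      by (simp add: rot_outside)
  qed
qed

lemma rot_women: "rot n ` women n = men n"
proof
  show "rot n ` women n \<subseteq> men n"
    by (auto simp: women_def men_def rot_def)
  show "men n \<subseteq> rot n ` women n"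
  proof
    fix m
    assume "m \<in> men n"
    then have "m = rot n (m - n)" and "m - n \<in> women n"
      by (auto simp: women_def men_def rot_def)
    then show "m \<in> rot n ` women n"
      by blast
  qed
qed

lemma rot_men: "rot n ` men n = women n"
proof
  show "rot n ` men n \<subseteq> women n"
    by (auto simp: women_def men_def rot_def)
  show "women n \<subseteq> rot n ` men n"
  proof
    fix w
    assume w: "w \<in> women n"
    have "w = rot n (if w = 1 then 2 * n else w - 1 + n)"
      and "(if w = 1 then 2 * n else w - 1 + n) \<in> men n"
      using w by (auto simp: women_def men_def rot_def)
    then show "w \<in> rot n ` men n"
      by blast
  qed
qed

lemma rot_permutes: "rot n permutes agents n"
proof (rule bij_imp_permutes)
  have "rot n ` agents n = agents n"
    unfolding agents_def image_Un rot_women rot_men by blast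
  then show "bij_betw (rot n) (agents n) (agents n)"
    using inj_on_subset[OF inj_rot subset_UNIV] by (simp add: bij_betw_def)
qed (rule rot_outside)

lemma rot_Gstar: "rot n \<in> Gstar n"
  using rot_permutes rot_women rot_men by (auto simp: Gstar_def)

lemma seat_dist_rot:
  assumes "z \<in> agents n" and "x \<in> agents n"
  shows "seat_dist n (rot n z) (rot n x) = seat_dist n z x"
  unfolding seat_dist_def seat_rot_mod[OF assms(1)] seat_rot_mod[OF assms(2)]
  using seat_less[OF assms(2)] seat_less[OF assms(1)] by (rule mod_diff_Suc_Suc)

lemma odd_seat_dist_iff:
  assumes "z \<in> agents n" and "x \<in> agents n"
  shows "odd (seat_dist n z x) \<longleftrightarrow> (x \<in> men n \<longleftrightarrow> z \<in> women n)"
proof -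
  have "odd (seat_dist n z x) \<longleftrightarrow> odd (seat n x + seat n z)"
    unfolding seat_dist_def using seat_less[OF assms(1)] by (simp add: odd_mod_diff_iff)
  also have "\<dots> \<longleftrightarrow> (x \<in> men n \<longleftrightarrow> z \<in> women n)"
    using even_seat_iff[OF assms(1)] even_seat_iff[OF assms(2)] assms
    by (auto simp: agents_def women_def men_def)
  finally show ?thesis .
qed

lemma seat_dist_inj: "inj_on (seat_dist n z) (agents n)" if "z \<in> agents n"
proof (rule inj_onI)
  fix x y
  assume x: "x \<in> agents n" and y: "y \<in> agents n" and "seat_dist n z x = seat_dist n z y"
  then have "seat n x = seat n y"
    using mod_diff_cancel_right[OF seat_less[OF x] seat_less[OF y] seat_less[OF that]]
    unfolding seat_dist_def by blast
  then show "x = y"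
    using seat_inj x y by (auto dest: inj_onD)
qed

lemma seat_dist_add_swap:
  assumes "z \<in> agents n" and "x \<in> agents n" and "x \<noteq> z"
  shows "seat_dist n z x + seat_dist n x z = 2 * n"
proof -
  have "seat n x \<noteq> seat n z"
    using assms seat_inj by (auto dest: inj_onD)
  then show ?thesis
    unfolding seat_dist_def using seat_less[OF assms(2)] seat_less[OF assms(1)]
    by (rule mod_diff_add_swap)
qed

lemma odd_seat_dist_set:
  assumes "z \<in> agents n"
  shows "{x \<in> agents n. odd (seat_dist n z x)} = (if z \<in> women n then men n else women n)"
  using assms odd_seat_dist_iff[OF assms] women_men_disjoint[of n] unfolding agents_def by auto

lemma linear_order_on_round_table_profile:
  assumes "z \<in> agents n"
  shows "linear_order_on {x \<in> agents n. odd (seat_dist n z x)} (round_table_profile n z)"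
proof -
  let ?B = "{x \<in> agents n. odd (seat_dist n z x)}"
  have eq: "round_table_profile n z = {(x, y). x \<in> ?B \<and> y \<in> ?B \<and> seat_dist n z x \<le> seat_dist n z y}"
    using assms by (auto simp: round_table_profile_def)
  have inj: "inj_on (seat_dist n z) ?B"
    using seat_dist_inj[OF assms] by (rule inj_on_subset) blast
  show ?thesis
    unfolding eq using inj by (rule linear_order_on_key)
qed

lemma round_table_profile_in_profiles: "round_table_profile n \<in> profiles n"
proof -
  have "linear_order_on (men n) (round_table_profile n x)" if "x \<in> women n" for x
    using linear_order_on_round_table_profile[of x n] odd_seat_dist_set[of x n] that
    by (simp add: agents_def)
  moreover have "linear_order_on (women n) (round_table_profile n y)" if "y \<in> men n" for y
  proof -
    have "y \<notin> women n"
      using that women_men_disjoint by blast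
    then show ?thesis
      using linear_order_on_round_table_profile[of y n] odd_seat_dist_set[of y n] that
      by (simp add: agents_def)
  qed
  ultimately show ?thesis
    by (simp add: profiles_def round_table_profile_def)
qed

lemma round_table_profile_rot: "profile_act (round_table_profile n) (rot n) = round_table_profile n"
proof (rule profile_act_eqI)
  show "bij (rot n)"
    using rot_permutes permutes_bij by blast
  show "(rot n u, rot n v) \<in> round_table_profile n (rot n z) \<longleftrightarrow> (u, v) \<in> round_table_profile n z"
    for z u v
  proof (cases "z \<in> agents n \<and> u \<in> agents n \<and> v \<in> agents n")
    case True
    then show ?thesis
      using rot_in_agents_iff seat_dist_rot
      by (simp add: round_table_profile_def)
  next
    case False
    then show ?thesis
      using rot_in_agents_iff by (auto simp: round_table_profile_def)
  qed
qed

lemma seat_rot_funpow_one: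
  "k < 2 * n \<Longrightarrow> (rot n ^^ k) 1 \<in> agents n \<and> seat n ((rot n ^^ k) 1) = k"
proof (induction k)
  case 0
  then show ?case
    by (simp add: agents_iff seat_def)
next
  case (Suc k)
  then show ?case
    using seat_rot rot_in_agents_iff by simp
qed

lemma rot_invariant_constant:
  assumes inv: "\<And>x. x \<in> agents n \<Longrightarrow> g (rot n x) = g x" and x: "x \<in> agents n"
  shows "g x = g 1"
proof -
  have "1 \<in> agents n"
    using x by (simp add: agents_iff)
  have "(rot n ^^ k) 1 \<in> agents n \<and> g ((rot n ^^ k) 1) = g 1" for k
  proof (induction k)
    case 0
    then show ?case
      using \<open>1 \<in> agents n\<close> by simp
  next
    case (Suc k)
    then show ?case
      using rot_in_agents_iff inv by simp
  qed
  moreover have "(rot n ^^ seat n x) 1 = x"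
    using seat_rot_funpow_one[OF seat_less[OF x]] seat_inj x by (auto dest: inj_onD)
  ultimately show ?thesis
    by metis
qed

lemma matching_rot_not_commute:
  assumes "even n" and "0 < n" and \<mu>: "\<mu> \<in> matchings n"
  shows "\<mu> \<circ> rot n \<noteq> rot n \<circ> \<mu>"
proof
  assume comm: "\<mu> \<circ> rot n = rot n \<circ> \<mu>"
  have one: "1 \<in> women n" "1 \<in> agents n"
    using assms(2) by (auto simp: agents_def women_def)
  have "\<mu> ` women n = men n" and "\<And>z. z \<in> agents n \<Longrightarrow> \<mu> (\<mu> z) = z"
    using \<mu> unfolding matchings_def by blast+
  then have partner: "\<mu> 1 \<in> men n" "\<mu> 1 \<in> agents n" "\<mu> (\<mu> 1) = 1"
    using one unfolding agents_def by blast+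
  define j where "j = seat_dist n 1 (\<mu> 1)"
  have "seat_dist n (rot n x) (\<mu> (rot n x)) = seat_dist n x (\<mu> x)" if x: "x \<in> agents n" for x
  proof -
    have "\<mu> x \<in> agents n"
      using \<mu> x by (simp add: matchings_def permutes_in_image)
    then show ?thesis
      using comm seat_dist_rot[OF x] by (metis comp_apply)
  qed
  then have "seat_dist n (\<mu> 1) (\<mu> (\<mu> 1)) = j"
    unfolding j_def by (rule rot_invariant_constant[OF _ partner(2)])
  then have "seat_dist n (\<mu> 1) 1 = j"
    by (simp only: partner(3))
  moreover have "\<mu> 1 \<noteq> 1"
    using one(1) partner(1) women_men_disjoint by (metis IntI empty_iff)
  ultimately have "j + j = 2 * n"
    using seat_dist_add_swap[OF one(2) partner(2)] unfolding j_def by simp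
  moreover have "odd j"
    unfolding j_def using odd_seat_dist_iff[OF one(2) partner(2)] one(1) partner(1) by blast
  ultimately show False
    using assms(1) by presburger
qed

theorem theorem2:
  fixes n :: nat
  assumes "n \<ge> 2" and "even n"
  shows "\<not> (\<exists>F. mechanism n F \<and> resolute n F \<and> symmetric n F)"
proof
  assume "\<exists>F. mechanism n F \<and> resolute n F \<and> symmetric n F"
  then obtain F where mech: "mechanism n F" and res: "resolute n F" and sym: "symmetric n F"
    by blast
  define p where "p = round_table_profile n"
  have p: "p \<in> profiles n"
    unfolding p_def by (rule round_table_profile_in_profiles)
  then have "card (F p) = 1"
    using res by (simp add: resolute_def)
  then obtain \<mu> where "F p = {\<mu>}"
    by (rule card_1_singletonE)
  then have "\<mu> \<in> matchings n" and "\<mu> \<in> F p"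
    using mech p by (auto simp: mechanism_def)
  moreover have "\<mu> \<circ> rot n = rot n \<circ> \<mu>"
    using resolute_symmetric_commute[OF res sym[unfolded symmetric_def] p rot_Gstar inj_rot]
      round_table_profile_rot \<open>\<mu> \<in> F p\<close> unfolding p_def by blast
  ultimately show False
    using matching_rot_not_commute[OF assms(2)] assms(1) by simp
qed

end
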